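(* For every integer $g\ge 0$, let $n'_g$ denote the number of gapsets of genus $g$ and depth at most $3$. Let $(\mathrm{F}_n)_{n\ge0}$ be the Fibonacci numbers ($\mathrm{F}_0=0$, $\mathrm{F}_1=1$, $\mathrm{F}_n=\mathrm{F}_{n-1}+\mathrm{F}_{n-2}$) and $(\mathrm{T}_n)_{n\ge 0}$ the tribonacci numbers ($\mathrm{T}_0=0$, $\mathrm{T}_1=\mathrm{T}_2=1$, $\mathrm{T}_n=\mathrm{T}_{n-1}+\mathrm{T}_{n-2}+\mathrm{T}_{n-3}$ for $n\ge3$). Then for all $g\ge 3$, $$2\mathrm{F}_g \,\le\, n'_g \,\le\, \mathrm{T}_{g+1}.$$
   Context: A gapset is a finite set $G \subset \mathbb{N}_+=\{1,2,3,\dots\}$ such that for all $z \in G$, whenever $z=x+y$ with $x,y\in\mathbb{N}_+$, we have $x\in G$ or $y\in G$. The multiplicity of $G$ is the least $m\ge 1$ with $m\notin G$; its conductor is $c=\max G+1$ (with $c=0$ if $G=\emptyset$); its genus is $|G|$; its depth is $\lceil c/m\rceil$. *)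

theory Defs
  imports Main "HOL-Number_Theory.Fib"
begin

definition gapset :: "nat set \<Rightarrow> bool" where
  "gapset G \<longleftrightarrow> finite G \<and> 0 \<notin> G \<and>
     (\<forall>z\<in>G. \<forall>x y. x > 0 \<and> y > 0 \<and> z = x + y \<longrightarrow> x \<in> G \<or> y \<in> G)"

definition multiplicity_gs :: "nat set \<Rightarrow> nat" where
  "multiplicity_gs G = (LEAST m. m \<ge> 1 \<and> m \<notin> G)"

definition conductor_gs :: "nat set \<Rightarrow> nat" where
  "conductor_gs G = (if G = {} then 0 else Max G + 1)"

definition genus_gs :: "nat set \<Rightarrow> nat" where
  "genus_gs G = card G"

definition depth_gs :: "nat set \<Rightarrow> nat" where
  "depth_gs G = nat \<lceil>real (conductor_gs G) / real (multiplicity_gs G)\<rceil>"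

fun trib :: "nat \<Rightarrow> nat" where
  "trib 0 = 0"
| "trib (Suc 0) = 1"
| "trib (Suc (Suc 0)) = 1"
| "trib (Suc (Suc (Suc n))) = trib (Suc (Suc n)) + trib (Suc n) + trib n"

definition n'_count :: "nat \<Rightarrow> nat" where
  "n'_count g = card {G. gapset G \<and> genus_gs G = g \<and> depth_gs G \<le> 3}"

end

theory Submission
  imports Defs
begin

text \<open>
  Let \<open>G\<close> be a gapset of multiplicity \<open>m\<close> and depth at most 3. Then \<open>G\<close> contains
  \<open>1, \<dots>, m - 1\<close>, avoids \<open>m\<close>, \<open>2m\<close> and everything from \<open>3m\<close> on, and, since \<open>m\<close> is not a
  gap, \<open>2m + 1 + i \<in> G\<close> forces \<open>m + 1 + i \<in> G\<close>. Hence \<open>G\<close> is determined by the word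
  \<open>w\<^sub>0 \<dots> w\<^sub>m\<^sub>-\<^sub>2\<close> over \<open>{1, 2, 3}\<close> with \<open>w\<^sub>i = 1 + [m + 1 + i \<in> G] + [2m + 1 + i \<in> G]\<close>,
  and the genus is the letter sum. So depth-3 gapsets of genus \<open>g\<close> inject into the
  compositions of \<open>g\<close> with parts 1, 2, 3, of which there are \<open>T\<^sub>g\<^sub>+\<^sub>1\<close>.

  Conversely, a word whose letter 3 can only occur in front always encodes a gapset: if
  neither summand of a gap \<open>z\<close> is a gap, both are at least \<open>m\<close>, so \<open>z \<ge> 2m\<close>, which for such a
  word leaves only \<open>z = 2m + 1 = m + (m + 1)\<close> with \<open>w\<^sub>0 = 3\<close>; but then \<open>m + 1\<close> is a gap. Counting the words over \<open>{1, 2}\<close> and those of the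
  form \<open>3w\<close> with \<open>w\<close> over \<open>{1, 2}\<close> gives \<open>F\<^sub>g\<^sub>+\<^sub>1 + F\<^sub>g\<^sub>-\<^sub>2 = 2F\<^sub>g\<close> gapsets.
\<close>

definition compositions :: "nat set \<Rightarrow> nat \<Rightarrow> nat list set" where
  "compositions S n = {xs. set xs \<subseteq> S \<and> sum_list xs = n}"

lemma compositions_0:
  assumes "0 \<notin> S"
  shows "compositions S 0 = {[]}"
proof -
  have "xs = []" if "set xs \<subseteq> S" "sum_list xs = 0" for xs
    using that assms by (cases xs) auto
  then show ?thesis
    unfolding compositions_def by auto
qed

lemma compositions_pos:
  assumes "0 \<notin> S" "n > 0"
  shows "compositions S n = (\<Union>k \<in> S \<inter> {1..n}. (#) k ` compositions S (n - k))"
proof (intro equalityI subsetI)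
  fix xs
  assume "xs \<in> compositions S n"
  with assms obtain k ys where xs: "xs = k # ys" and "k \<in> S" "set ys \<subseteq> S" "k + sum_list ys = n"
    by (cases xs) (auto simp: compositions_def)
  with assms(1) have "k \<in> S \<inter> {1..n}" "ys \<in> compositions S (n - k)"
    by (auto simp: compositions_def Suc_le_eq intro: Nat.gr0I)
  with xs show "xs \<in> (\<Union>k \<in> S \<inter> {1..n}. (#) k ` compositions S (n - k))"
    by blast
next
  fix xs
  assume "xs \<in> (\<Union>k \<in> S \<inter> {1..n}. (#) k ` compositions S (n - k))"
  then show "xs \<in> compositions S n"
    by (auto simp: compositions_def)
qed

lemma finite_compositions:
  assumes "0 \<notin> S"
  shows "finite (compositions S n)"
proof (induction n rule: less_induct)
  case (less n)
  then show ?case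
    using assms by (cases "n = 0") (simp_all add: compositions_0 compositions_pos)
qed

lemma card_compositions_pos:
  assumes "0 \<notin> S" "n > 0"
  shows "card (compositions S n) = (\<Sum>k \<in> S \<inter> {1..n}. card (compositions S (n - k)))"
proof -
  have "card (compositions S n) = (\<Sum>k \<in> S \<inter> {1..n}. card ((#) k ` compositions S (n - k)))"
    unfolding compositions_pos[OF assms]
    by (rule card_UN_disjoint) (auto simp: finite_compositions[OF assms(1)])
  then show ?thesis
    by (simp add: card_image)
qed

lemma card_compositions_12: "card (compositions {1, 2} n) = fib (Suc n)"
proof (induction n rule: fib.induct)
  case (3 n)
  have "{1, 2} \<inter> {1..Suc (Suc n)} = {1, 2::nat}"
    by auto
  with 3 show ?case
    by (simp add: card_compositions_pos)
qed (simp_all add: card_compositions_pos compositions_0)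

lemma card_compositions_123: "card (compositions {1, 2, 3} n) = trib (Suc n)"
proof (induction n rule: trib.induct)
  case 3
  have "{1, 2, 3} \<inter> {1..2} = {1, 2::nat}"
    by auto
  then show ?case
    by (simp add: card_compositions_pos compositions_0 numeral_2_eq_2)
next
  case (4 n)
  have "{1, 2, 3} \<inter> {1..Suc (Suc (Suc n))} = {1, 2, 3::nat}"
    by auto
  with 4 show ?case
    by (simp add: card_compositions_pos)
qed (simp_all add: card_compositions_pos compositions_0)

lemma gapset_add_memD:
  assumes "gapset G" "0 < a" "0 < b" "a \<notin> G" "a + b \<in> G"
  shows "b \<in> G"
  using assms unfolding gapset_def by blast

lemma
  assumes "finite G"
  shows multiplicity_gs_ge_1: "multiplicity_gs G \<ge> 1"
    and multiplicity_gs_notin: "multiplicity_gs G \<notin> G"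
    and less_multiplicity_gs_mem: "1 \<le> k \<Longrightarrow> k < multiplicity_gs G \<Longrightarrow> k \<in> G"
proof -
  obtain m where "m \<notin> insert 0 G"
    using ex_new_if_finite[OF infinite_UNIV_nat] assms by blast
  then have "\<exists>m. m \<ge> 1 \<and> m \<notin> G"
    by (intro exI[of _ m]) auto
  from LeastI_ex[OF this] show "multiplicity_gs G \<ge> 1" "multiplicity_gs G \<notin> G"
    unfolding multiplicity_gs_def by auto
  show "1 \<le> k \<Longrightarrow> k < multiplicity_gs G \<Longrightarrow> k \<in> G"
    unfolding multiplicity_gs_def using not_less_Least by blast
qed

lemma depth_gs_le_iff:
  assumes "finite G"
  shows "depth_gs G \<le> k \<longleftrightarrow> (\<forall>z \<in> G. z < k * multiplicity_gs G)"
proof -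
  let ?m = "multiplicity_gs G"
  have "?m > 0"
    using multiplicity_gs_ge_1[OF assms] by simp
  have "depth_gs G \<le> k \<longleftrightarrow> real (conductor_gs G) / real ?m \<le> real k"
    unfolding depth_gs_def by (simp add: nat_le_iff ceiling_le_iff)
  also have "\<dots> \<longleftrightarrow> conductor_gs G \<le> k * ?m"
    using \<open>?m > 0\<close> by (simp add: divide_le_eq flip: of_nat_mult)
  also have "\<dots> \<longleftrightarrow> (\<forall>z \<in> G. z < k * ?m)"
    using assms by (cases "G = {}") (auto simp: conductor_gs_def Suc_le_eq)
  finally show ?thesis .
qed

text \<open>With \<open>m = length xs + 1\<close>, the blocks are \<open>1..m - 1\<close>, \<open>m + 1 + i\<close> and \<open>2m + 1 + i\<close>.\<close>

definition gapset_of_word :: "nat list \<Rightarrow> nat set" where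
  "gapset_of_word xs = {1..length xs}
     \<union> (\<lambda>i. length xs + 2 + i) ` {i. i < length xs \<and> xs ! i \<ge> 2}
     \<union> (\<lambda>i. 2 * length xs + 3 + i) ` {i. i < length xs \<and> xs ! i = 3}"

lemma mem_gapset_of_word:
  "z \<in> gapset_of_word xs \<longleftrightarrow>
     1 \<le> z \<and> z \<le> length xs
   \<or> length xs + 2 \<le> z \<and> z < 2 * length xs + 2 \<and> xs ! (z - length xs - 2) \<ge> 2
   \<or> 2 * length xs + 3 \<le> z \<and> z < 3 * length xs + 3 \<and> xs ! (z - 2 * length xs - 3) = 3"
  unfolding gapset_of_word_def image_def
  by (auto intro: exI[of _ "z - length xs - 2"] exI[of _ "z - 2 * length xs - 3"])

lemma mem_gapset_of_word_middle:
  "i < length xs \<Longrightarrow> length xs + 2 + i \<in> gapset_of_word xs \<longleftrightarrow> xs ! i \<ge> 2"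
  by (simp add: mem_gapset_of_word)

lemma mem_gapset_of_word_top:
  "i < length xs \<Longrightarrow> 2 * length xs + 3 + i \<in> gapset_of_word xs \<longleftrightarrow> xs ! i = 3"
  by (simp add: mem_gapset_of_word)

lemma finite_gapset_of_word: "finite (gapset_of_word xs)"
  unfolding gapset_of_word_def by simp

lemma multiplicity_gapset_of_word: "multiplicity_gs (gapset_of_word xs) = length xs + 1"
  unfolding multiplicity_gs_def
  by (rule Least_equality) (auto simp: mem_gapset_of_word)

lemma depth_gapset_of_word: "depth_gs (gapset_of_word xs) \<le> 3"
  by (auto simp: depth_gs_le_iff finite_gapset_of_word multiplicity_gapset_of_word mem_gapset_of_word)

lemma gapset_gapset_of_word:
  assumes "3 \<notin> set (tl xs)"
  shows "gapset (gapset_of_word xs)"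
  unfolding gapset_def
proof (intro conjI ballI allI impI)
  show "finite (gapset_of_word xs)"
    by (rule finite_gapset_of_word)
  show "0 \<notin> gapset_of_word xs"
    by (simp add: mem_gapset_of_word)
  let ?n = "length xs"
  have not3: "xs ! j \<noteq> 3" if "0 < j" "j < ?n" for j
  proof -
    have "xs ! j = tl xs ! (j - 1)" "j - 1 < length (tl xs)"
      using that by (simp_all add: nth_tl)
    then show ?thesis
      using assms nth_mem by metis
  qed
  fix z x y
  assume z: "z \<in> gapset_of_word xs" and xy: "0 < x \<and> 0 < y \<and> z = x + y"
  show "x \<in> gapset_of_word xs \<or> y \<in> gapset_of_word xs"
  proof (rule ccontr)
    assume gaps: "\<not> (x \<in> gapset_of_word xs \<or> y \<in> gapset_of_word xs)"
    then have "x > ?n" "y > ?n"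
      using xy by (auto simp: mem_gapset_of_word)
    with z xy have top: "2 * ?n + 3 \<le> z" "z < 3 * ?n + 3" "xs ! (z - 2 * ?n - 3) = 3"
      by (auto simp: mem_gapset_of_word)
    have "\<not> 0 < z - 2 * ?n - 3"
      using not3[of "z - 2 * ?n - 3"] top by linarith
    with top have "z = 2 * ?n + 3" "xs ! 0 = 3"
      by simp_all
    moreover have "?n > 0"
      using top by linarith
    ultimately have "?n + 2 \<in> gapset_of_word xs"
      using mem_gapset_of_word_middle[of 0 xs] by simp
    moreover have "x = ?n + 2 \<or> y = ?n + 2"
      using \<open>x > ?n\<close> \<open>y > ?n\<close> xy \<open>z = 2 * ?n + 3\<close> by linarith
    ultimately show False
      using gaps by blast
  qed
qed

lemma inj_on_gapset_of_word: "inj_on gapset_of_word {xs. set xs \<subseteq> {1, 2, 3}}"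
proof (rule inj_onI)
  fix xs ys
  assume xs: "xs \<in> {xs. set xs \<subseteq> {1, 2, 3}}" and ys: "ys \<in> {xs. set xs \<subseteq> {1, 2, 3}}"
    and eq: "gapset_of_word xs = gapset_of_word ys"
  have len: "length xs = length ys"
    using arg_cong[OF eq, of multiplicity_gs] by (simp add: multiplicity_gapset_of_word)
  show "xs = ys"
  proof (rule nth_equalityI[OF len])
    fix i
    assume i: "i < length xs"
    let ?n = "length xs"
    have "xs ! i \<ge> 2 \<longleftrightarrow> ys ! i \<ge> 2"
      using eq i len mem_gapset_of_word_middle[of i xs] mem_gapset_of_word_middle[of i ys] by simp
    moreover have "xs ! i = 3 \<longleftrightarrow> ys ! i = 3"
      using eq i len mem_gapset_of_word_top[of i xs] mem_gapset_of_word_top[of i ys] by simp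
    moreover have "xs ! i \<in> {1, 2, 3}" "ys ! i \<in> {1, 2, 3}"
      using xs ys nth_mem[OF i] nth_mem[of i ys] i len by (simp_all add: subset_iff)
    ultimately show "xs ! i = ys ! i"
      by auto
  qed
qed

lemma card_gapset_of_word:
  assumes "set xs \<subseteq> {1, 2, 3}"
  shows "card (gapset_of_word xs) = sum_list xs"
proof -
  let ?n = "length xs"
  have letter: "xs ! i = 1 + of_bool (xs ! i \<ge> 2) + of_bool (xs ! i = 3)" if "i < ?n" for i
    using assms nth_mem[OF that] by auto
  have "card (gapset_of_word xs)
      = card {1..?n} + card ((\<lambda>i. ?n + 2 + i) ` {i. i < ?n \<and> xs ! i \<ge> 2})
        + card ((\<lambda>i. 2 * ?n + 3 + i) ` {i. i < ?n \<and> xs ! i = 3})"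
    unfolding gapset_of_word_def by (subst card_Un_disjoint; (auto)?)+
  also have "\<dots> = ?n + card {i. i < ?n \<and> xs ! i \<ge> 2} + card {i. i < ?n \<and> xs ! i = 3}"
    by (simp add: card_image inj_on_def)
  also have "\<dots> = (\<Sum>i < ?n. 1 + of_bool (xs ! i \<ge> 2) + of_bool (xs ! i = 3))"
    unfolding sum.distrib by (simp add: Int_def)
  also have "\<dots> = sum_list xs"
    using letter by (simp add: sum_list_sum_nth atLeast0LessThan)
  finally show ?thesis .
qed

definition word_of_gapset :: "nat set \<Rightarrow> nat list" where
  "word_of_gapset G = (let n = multiplicity_gs G - 1 in
     map (\<lambda>i. 1 + of_bool (n + 2 + i \<in> G) + of_bool (2 * n + 3 + i \<in> G)) [0..<n])"

lemma set_word_of_gapset: "set (word_of_gapset G) \<subseteq> {1, 2, 3}"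
  by (auto simp: word_of_gapset_def Let_def)

lemma gapset_of_word_of_gapset:
  assumes "gapset G" "depth_gs G \<le> 3"
  shows "gapset_of_word (word_of_gapset G) = G"
proof -
  have fin: "finite G" and "0 \<notin> G"
    using assms(1) unfolding gapset_def by blast+
  define n where "n = multiplicity_gs G - 1"
  have m: "multiplicity_gs G = n + 1"
    using multiplicity_gs_ge_1[OF fin] n_def by simp
  have "n + 1 \<notin> G" and small: "\<And>k. 1 \<le> k \<Longrightarrow> k \<le> n \<Longrightarrow> k \<in> G"
    using multiplicity_gs_notin[OF fin] less_multiplicity_gs_mem[OF fin] m by auto
  have large: "z \<notin> G" if "z \<ge> 3 * n + 3" for z
    using assms(2) that by (auto simp: depth_gs_le_iff[OF fin] m)
  have "2 * n + 2 \<notin> G"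
    using gapset_add_memD[OF assms(1), of "n + 1" "n + 1"] \<open>n + 1 \<notin> G\<close> by (auto simp: mult_2)
  have forced: "n + 2 + i \<in> G" if "2 * n + 3 + i \<in> G" for i
  proof (rule gapset_add_memD[OF assms(1) _ _ \<open>n + 1 \<notin> G\<close>])
    have "(n + 1) + (n + 2 + i) = 2 * n + 3 + i"
      by simp
    with that show "(n + 1) + (n + 2 + i) \<in> G"
      by (simp only:)
  qed simp_all
  let ?w = "word_of_gapset G"
  have len: "length ?w = n"
    and nth: "\<And>i. i < n \<Longrightarrow> ?w ! i = 1 + of_bool (n + 2 + i \<in> G) + of_bool (2 * n + 3 + i \<in> G)"
    unfolding word_of_gapset_def Let_def n_def[symmetric] by simp_all
  have middle: "n + 2 + i \<in> gapset_of_word ?w \<longleftrightarrow> n + 2 + i \<in> G" if "i < n" for i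
    using mem_gapset_of_word_middle[of i ?w] forced[of i] that by (simp add: len nth)
  have top: "2 * n + 3 + i \<in> gapset_of_word ?w \<longleftrightarrow> 2 * n + 3 + i \<in> G" if "i < n" for i
    using mem_gapset_of_word_top[of i ?w] forced[of i] that by (simp add: len nth)
  show ?thesis
  proof (rule set_eqI)
    fix z
    consider "z = 0" | "1 \<le> z" "z \<le> n" | "z = n + 1" | "n + 2 \<le> z" "z < 2 * n + 2"
      | "z = 2 * n + 2" | "2 * n + 3 \<le> z" "z < 3 * n + 3" | "z \<ge> 3 * n + 3"
      by linarith
    then show "z \<in> gapset_of_word ?w \<longleftrightarrow> z \<in> G"
    proof cases
      case 1
      then show ?thesis
        using \<open>0 \<notin> G\<close> by (simp add: mem_gapset_of_word)
    next
      case 2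
      then show ?thesis
        using small[of z] by (simp add: mem_gapset_of_word len)
    next
      case 3
      then show ?thesis
        using \<open>n + 1 \<notin> G\<close> by (simp add: mem_gapset_of_word len)
    next
      case 4
      then have "z = n + 2 + (z - n - 2)" "z - n - 2 < n"
        by linarith+
      then show ?thesis
        using middle by metis
    next
      case 5
      then show ?thesis
        using \<open>2 * n + 2 \<notin> G\<close> by (simp add: mem_gapset_of_word len)
    next
      case 6
      then have "z = 2 * n + 3 + (z - 2 * n - 3)" "z - 2 * n - 3 < n"
        by linarith+
      then show ?thesis
        using top by metis
    next
      case 7
      then show ?thesis
        using large[of z] by (simp add: mem_gapset_of_word len)
    qed
  qed
qed

lemma depth3_gapsets_subset:
  "{G. gapset G \<and> genus_gs G = g \<and> depth_gs G \<le> 3} \<subseteq> gapset_of_word ` compositions {1, 2, 3} g"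
proof
  fix G
  assume "G \<in> {G. gapset G \<and> genus_gs G = g \<and> depth_gs G \<le> 3}"
  then have G: "gapset G" "card G = g" "depth_gs G \<le> 3"
    by (simp_all add: genus_gs_def)
  let ?w = "word_of_gapset G"
  have eq: "gapset_of_word ?w = G"
    using G(1,3) by (rule gapset_of_word_of_gapset)
  have "sum_list ?w = g"
    using card_gapset_of_word[OF set_word_of_gapset[of G]] eq G(2) by simp
  then have "?w \<in> compositions {1, 2, 3} g"
    using set_word_of_gapset by (simp add: compositions_def)
  with eq show "G \<in> gapset_of_word ` compositions {1, 2, 3} g"
    by (metis image_eqI)
qed

lemma n'_count_le_trib: "n'_count g \<le> trib (g + 1)"
proof -
  have fin: "finite (compositions {1, 2, 3} g)"
    by (rule finite_compositions) simp
  have "n'_count g \<le> card (gapset_of_word ` compositions {1, 2, 3} g)"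
    unfolding n'_count_def using fin by (intro card_mono finite_imageI depth3_gapsets_subset)
  also have "\<dots> \<le> card (compositions {1, 2, 3} g)"
    using fin by (rule card_image_le)
  also have "\<dots> = trib (g + 1)"
    using card_compositions_123[of g] by simp
  finally show ?thesis .
qed

lemma card_compositions_12_Un_Cons_3:
  assumes "g \<ge> 3"
  shows "card (compositions {1, 2} g \<union> (#) 3 ` compositions {1, 2} (g - 3))
           = fib (g + 1) + fib (g - 2)"
proof -
  have "3 \<notin> set xs" if "xs \<in> compositions {1, 2} g" for xs
    using that by (auto simp: compositions_def)
  then have disjoint: "compositions {1, 2} g \<inter> (#) 3 ` compositions {1, 2} (g - 3) = {}"
    by fastforce
  have "card (compositions {1, 2} g \<union> (#) 3 ` compositions {1, 2} (g - 3))
      = card (compositions {1, 2} g) + card ((#) 3 ` compositions {1, 2} (g - 3))"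
    using disjoint by (intro card_Un_disjoint finite_imageI finite_compositions) simp_all
  also have "\<dots> = card (compositions {1, 2} g) + card (compositions {1, 2} (g - 3))"
    by (subst card_image) (simp_all add: inj_on_def)
  also have "\<dots> = fib (Suc g) + fib (Suc (g - 3))"
    by (simp only: card_compositions_12)
  also have "Suc (g - 3) = g - 2"
    using assms by linarith
  finally show ?thesis
    by (simp only: Suc_eq_plus1)
qed

lemma fib_le_n'_count:
  assumes "g \<ge> 3"
  shows "fib (g + 1) + fib (g - 2) \<le> n'_count g"
proof -
  let ?D = "{G. gapset G \<and> genus_gs G = g \<and> depth_gs G \<le> 3}"
  let ?W = "compositions {1, 2} g \<union> (#) 3 ` compositions {1, 2} (g - 3)"
  have W_compositions: "?W \<subseteq> compositions {1, 2, 3} g"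
    using assms by (auto simp: compositions_def)
  have "gapset_of_word xs \<in> ?D" if "xs \<in> ?W" for xs
  proof -
    have "3 \<notin> set (tl xs)"
      using that by (cases xs) (auto simp: compositions_def)
    moreover have "set xs \<subseteq> {1, 2, 3}" "sum_list xs = g"
      using that W_compositions by (auto simp: compositions_def)
    ultimately show ?thesis
      by (simp add: genus_gs_def card_gapset_of_word gapset_gapset_of_word depth_gapset_of_word)
  qed
  then have "gapset_of_word ` ?W \<subseteq> ?D"
    by blast
  moreover have "finite ?D"
    by (rule finite_subset[OF depth3_gapsets_subset]) (simp add: finite_compositions)
  ultimately have "card (gapset_of_word ` ?W) \<le> n'_count g"
    unfolding n'_count_def by (rule card_mono[rotated])
  moreover have "inj_on gapset_of_word ?W"
    by (rule inj_on_subset[OF inj_on_gapset_of_word])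
       (use W_compositions in \<open>auto simp: compositions_def\<close>)
  ultimately show ?thesis
    using card_image[of gapset_of_word ?W] card_compositions_12_Un_Cons_3[OF assms] by simp
qed

theorem mainTheorem3:
  fixes g :: nat
  assumes "g \<ge> 3"
  shows "2 * fib g \<le> n'_count g \<and> n'_count g \<le> trib (g + 1)"
proof -
  define n where "n = g - 3"
  have g: "g = Suc (Suc (Suc n))"
    using assms n_def by simp
  have "2 * fib g = fib (g + 1) + fib (g - 2)"
    unfolding g by simp
  then show ?thesis
    using fib_le_n'_count[OF assms] n'_count_le_trib by simp
qed

end
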